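(* Let $m=2k+1$ with $k\in\mathbb{N}$. For every $\beta\in(\frac{k+1+\sqrt{k^2+6k+5}}{2},m+1]$ there exists $x\in(0,\frac{m}{\beta-1})$ with a unique $\beta$-expansion, i.e. $|\Sigma_{\beta,m}(x)|=1$.
   Context: $\Sigma_{\beta,m}(x)=\{(\epsilon_i)_{i=1}^\infty\in\{0,\ldots,m\}^{\mathbb{N}}:\sum_{i\ge1}\epsilon_i\beta^{-i}=x\}$; its elements are the $\beta$-expansions of $x$. *)

theory Defs
  imports "HOL-Analysis.Analysis"
begin

text \<open>A sequence (eps_i)_{i>=1} is represented as eps :: nat => nat with
  eps n standing for eps_{n+1}; the value is sum_{n>=0} eps n * beta^-(n+1).\<close>
definition beta_expansions :: "real \<Rightarrow> nat \<Rightarrow> real \<Rightarrow> (nat \<Rightarrow> nat) set" where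
  "beta_expansions \<beta> m x =
     {\<epsilon>. (\<forall>n. \<epsilon> n \<le> m) \<and> (\<lambda>n. real (\<epsilon> n) / \<beta> ^ (Suc n)) sums x}"

end

theory Submission
  imports Defs
begin

text \<open>The point is x = ((k+1)\<beta> + k)/(\<beta>^2 - 1), the value of the periodic expansion
  ((k+1) k) repeated forever. Together with y = (k\<beta> + k + 1)/(\<beta>^2 - 1) it forms a cycle
  \<beta>x = (k+1) + y, \<beta>y = k + x, and x + y = m/(\<beta>-1). Since every expansion of a value z
  has its first digit in [\<beta>z - m/(\<beta>-1), \<beta>z], the first digit of an expansion of x is
  forced to be k+1 as soon as x, y < 1, and likewise k for y; the lower bound on \<beta> is exactly
  the condition x < 1. Hence each digit is forced and the expansion is unique.\<close>

lemma beta_expansions_tail: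
  assumes "\<beta> \<noteq> 0" "e \<in> beta_expansions \<beta> m y"
  shows "(\<lambda>n. e (Suc n)) \<in> beta_expansions \<beta> m (\<beta> * y - e 0)"
proof -
  have "(\<lambda>n. real (e (Suc n)) / \<beta> ^ Suc (Suc n)) sums (y - e 0 / \<beta>)"
    using assms(2) sums_Suc_iff[of "\<lambda>n. real (e n) / \<beta> ^ Suc n"]
    by (simp add: beta_expansions_def)
  then have "(\<lambda>n. \<beta> * (real (e (Suc n)) / \<beta> ^ Suc (Suc n))) sums (\<beta> * (y - e 0 / \<beta>))"
    by (rule sums_mult)
  moreover have "\<beta> * (y - e 0 / \<beta>) = \<beta> * y - e 0"
    using assms(1) by (simp add: field_simps)
  ultimately show ?thesis
    using assms by (simp add: beta_expansions_def)
qed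

lemma sums_divide_power_Suc:
  fixes \<beta> c :: real
  assumes "\<beta> > 1"
  shows "(\<lambda>n. c / \<beta> ^ Suc n) sums (c / (\<beta> - 1))"
proof -
  have "(\<lambda>n. (1 / \<beta>) ^ n) sums (1 / (1 - 1 / \<beta>))"
    using assms by (intro geometric_sums) auto
  then have "(\<lambda>n. c / \<beta> * (1 / \<beta>) ^ n) sums (c / \<beta> * (1 / (1 - 1 / \<beta>)))"
    by (rule sums_mult)
  then show ?thesis
    using assms by (simp add: field_simps power_divide)
qed

lemma beta_expansions_value_bounds:
  assumes "\<beta> > 1" "e \<in> beta_expansions \<beta> m y"
  shows "0 \<le> y" "y \<le> m / (\<beta> - 1)"
proof -
  have e: "\<forall>n. e n \<le> m" "(\<lambda>n. real (e n) / \<beta> ^ Suc n) sums y"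
    using assms(2) by (simp_all add: beta_expansions_def)
  show "0 \<le> y"
    using assms(1) by (intro sums_le[OF _ sums_zero e(2)]) simp
  show "y \<le> m / (\<beta> - 1)"
    using e assms(1)
    by (intro sums_le[OF _ e(2) sums_divide_power_Suc]) (auto intro!: divide_right_mono)
qed

lemma beta_expansions_first_digit_forced:
  assumes "\<beta> > 1" "e \<in> beta_expansions \<beta> m y"
    and "\<beta> * y = d + t" "t < 1" "m / (\<beta> - 1) - t < 1"
  shows "e 0 = d"
proof -
  have "0 \<le> \<beta> * y - e 0" "\<beta> * y - e 0 \<le> m / (\<beta> - 1)"
    using beta_expansions_value_bounds[OF _ beta_expansions_tail] assms(1,2) by auto
  then have "real d - 1 < e 0" "real (e 0) < d + 1"
    using assms(3-5) by linarith+
  then show ?thesis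
    by linarith
qed

lemma beta_expansions_unique_if_forced:
  assumes "\<beta> \<noteq> 0"
    and forced: "\<And>y e. y \<in> A \<Longrightarrow> e \<in> beta_expansions \<beta> m y \<Longrightarrow>
      e 0 = d y \<and> \<beta> * y - d y \<in> A"
    and "y \<in> A" "e \<in> beta_expansions \<beta> m y" "e' \<in> beta_expansions \<beta> m y"
  shows "e = e'"
proof
  fix n
  from assms(3-5) show "e n = e' n"
  proof (induction n arbitrary: y e e')
    case 0
    then show ?case
      using forced by metis
  next
    case (Suc n)
    have "e 0 = d y" "e' 0 = d y" "\<beta> * y - d y \<in> A"
      using forced Suc.prems by blast+
    then show ?case
      using Suc.IH[of "\<beta> * y - d y" "\<lambda>n. e (Suc n)" "\<lambda>n. e' (Suc n)"]
        beta_expansions_tail[OF assms(1)] Suc.prems by metis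
  qed
qed

lemma sums_alternating_digits:
  fixes \<beta> :: real and p q :: nat
  assumes "\<beta> > 1"
  defines "s \<equiv> \<lambda>n. if even n then p else q"
  shows "(\<lambda>n. real (s n) / \<beta> ^ Suc n) sums ((p * \<beta> + q) / (\<beta>\<^sup>2 - 1))"
proof -
  have "\<forall>n. s n \<le> max p q"
    by (simp add: s_def)
  then have "summable (\<lambda>n. real (s n) / \<beta> ^ Suc n)"
    using assms(1) by (intro summable_comparison_test[OF _ sums_summable[OF
          sums_divide_power_Suc[of \<beta> "max p q"]]]) (auto intro!: divide_right_mono)
  then obtain S where S: "s \<in> beta_expansions \<beta> (max p q) S"
    using \<open>\<forall>n. s n \<le> max p q\<close> by (auto simp: beta_expansions_def summable_sums)
  have "(\<lambda>n. s (Suc (Suc n))) \<in> beta_expansions \<beta> (max p q) (\<beta> * (\<beta> * S - p) - q)"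
    using beta_expansions_tail[OF _ beta_expansions_tail[OF _ S]] assms(1) by (simp add: s_def)
  moreover have "(\<lambda>n. s (Suc (Suc n))) = s"
    by (simp add: s_def)
  ultimately have "S = \<beta> * (\<beta> * S - p) - q"
    using S sums_unique2 by (auto simp: beta_expansions_def)
  moreover have "\<beta>\<^sup>2 - 1 \<noteq> 0"
    using one_less_power[OF assms(1), of 2] by linarith
  ultimately have "S = (p * \<beta> + q) / (\<beta>\<^sup>2 - 1)"
    by (simp add: field_simps power2_eq_square)
  then show ?thesis
    using S by (simp add: beta_expansions_def)
qed

lemma beta_expansions_two_cycle:
  fixes a b \<beta> :: real and p q m :: nat
  assumes "\<beta> > 1" "p \<le> m" "q \<le> m"
    and cycle: "\<beta> * a = real p + b" "\<beta> * b = real q + a"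
    and "a < 1" "b < 1" "a + b = m / (\<beta> - 1)"
  shows "beta_expansions \<beta> m a = {\<lambda>n. if even n then p else q}"
proof -
  define d where "d y = (if y = a then p else q)" for y
  have forced: "e 0 = d y \<and> \<beta> * y - d y \<in> {a, b}"
    if "y \<in> {a, b}" "e \<in> beta_expansions \<beta> m y" for y e
    using that assms beta_expansions_first_digit_forced[OF assms(1) that(2)]
    by (auto simp: d_def)
  have "\<beta> * (\<beta> * a) = \<beta> * p + q + a"
    using cycle by (simp add: distrib_left)
  then have "a * (\<beta>\<^sup>2 - 1) = p * \<beta> + q"
    by (simp add: power2_eq_square algebra_simps)
  moreover have "\<beta>\<^sup>2 - 1 \<noteq> 0"
    using one_less_power[OF assms(1), of 2] by linarith
  ultimately have "a = (p * \<beta> + q) / (\<beta>\<^sup>2 - 1)"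
    by (simp add: eq_divide_eq)
  then have "(\<lambda>n. if even n then p else q) \<in> beta_expansions \<beta> m a"
    using sums_alternating_digits[OF assms(1)] assms(2,3) by (simp add: beta_expansions_def)
  then show ?thesis
    using beta_expansions_unique_if_forced[of \<beta> "{a, b}" m d a] forced assms(1) by fastforce
qed

lemma quadratic_pos_of_lower_bound:
  fixes \<beta> :: real
  assumes "(real k + 1 + sqrt (real k ^ 2 + 6 * real k + 5)) / 2 < \<beta>"
  shows "\<beta>\<^sup>2 - (real k + 1) * \<beta> - (real k + 1) > 0"
proof -
  define r where "r = sqrt (real k ^ 2 + 6 * real k + 5)"
  have "r/2 < \<beta> - (k + 1) / 2" "r \<ge> 0"
    using assms by (simp_all add: r_def field_simps)
  then have "(r/2)\<^sup>2 < (\<beta> - (k + 1) / 2)\<^sup>2"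
    by (intro power_strict_mono) auto
  moreover have "r\<^sup>2 = real k ^ 2 + 6 * real k + 5"
    by (simp add: r_def)
  ultimately show ?thesis
    by (simp add: power2_eq_square field_simps)
qed

lemma alternating_cycle_points:
  fixes \<beta> :: real and k :: nat
  assumes "\<beta> > 1" and quad: "\<beta>\<^sup>2 - (real k + 1) * \<beta> - (real k + 1) > 0"
  defines "a \<equiv> ((k + 1) * \<beta> + k) / (\<beta>\<^sup>2 - 1)"
    and "b \<equiv> (k * \<beta> + k + 1) / (\<beta>\<^sup>2 - 1)"
  shows "0 < b" "b < a" "a < 1"
    and "\<beta> * a = real (k + 1) + b" "\<beta> * b = real k + a"
    and "a + b = (2 * k + 1) / (\<beta> - 1)"
proof -
  have D: "\<beta>\<^sup>2 - 1 > 0"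
    using one_less_power[OF assms(1), of 2] by linarith
  show "0 < b"
    unfolding b_def using D assms(1) by (intro divide_pos_pos) (auto intro: add_nonneg_pos)
  show "b < a"
    using D assms(1) by (simp add: a_def b_def divide_strict_right_mono algebra_simps)
  show "a < 1"
    using D quad by (simp add: a_def field_simps)
  show "\<beta> * a = real (k + 1) + b" "\<beta> * b = real k + a"
    using D by (simp_all add: a_def b_def field_simps power2_eq_square)
  have "\<beta>\<^sup>2 - 1 = (\<beta> - 1) * (\<beta> + 1)"
    by (simp add: power2_eq_square algebra_simps)
  then have "a + b = ((2 * k + 1) * (\<beta> + 1)) / ((\<beta> - 1) * (\<beta> + 1))"
    unfolding a_def b_def add_divide_distrib[symmetric] by (simp add: algebra_simps)
  then show "a + b = (2 * k + 1) / (\<beta> - 1)"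
    using assms(1) by simp
qed

theorem proposition3p7:
  fixes k m :: nat and \<beta> :: real
  assumes "m = 2 * k + 1"
    and "(real k + 1 + sqrt (real k ^ 2 + 6 * real k + 5)) / 2 < \<beta>"
    and "\<beta> \<le> real m + 1"
  shows "\<exists>x. 0 < x \<and> x < real m / (\<beta> - 1) \<and> card (beta_expansions \<beta> m x) = 1"
proof -
  have "sqrt (real k ^ 2 + 6 * real k + 5) \<ge> 1"
    by simp
  then have "\<beta> > 1"
    using assms(2) by (simp del: real_sqrt_ge_1_iff)
  define a where "a = ((k + 1) * \<beta> + k) / (\<beta>\<^sup>2 - 1)"
  define b where "b = (k * \<beta> + k + 1) / (\<beta>\<^sup>2 - 1)"
  note cycle = alternating_cycle_points[OF \<open>\<beta> > 1\<close> quadratic_pos_of_lower_bound[OF assms(2)],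
      folded a_def b_def]
  then have "beta_expansions \<beta> m a = {\<lambda>n. if even n then k + 1 else k}"
    using beta_expansions_two_cycle[OF \<open>\<beta> > 1\<close>, of "k + 1" m k a b] assms(1) by simp
  then show ?thesis
    using cycle assms(1) by (intro exI[of _ a]) auto
qed

end
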